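(* The graph $H_q$ is $d$-regular on $N$ vertices, where $N = q^4-q^3+q^2$ and $d=(q+1)(q^2-1)$. Moreover: (a) the family $\mathscr{C}_q$ consists of $q^3+1$ cliques of order $q^2$, each maximal, and every two of them share exactly one vertex; (b) each vertex of $H_q$ lies in exactly $q+1$ cliques of $\mathscr{C}_q$ and each edge of $H_q$ lies in exactly one clique of $\mathscr{C}_q$; (c) every copy of $K_4$ in $H_q$ has at least three of its vertices in a common clique of $\mathscr{C}_q$; (d) $H_q$ is strongly regular: any two adjacent vertices have exactly $2q^2-2$ common neighbours and any two non-adjacent vertices have exactly $(q+1)^2$ common neighbours.
   Context: Let $q$ be a prime power and $PG(2,q^2)$ the projective plane over $\mathbb{F}_{q^2}$. The Hermitian unital is $\mathscr{U}_q = \{\langle X,Y,Z\rangle : X^{q+1}+Y^{q+1}+Z^{q+1}=0\}$, a set of points of $PG(2,q^2)$. Every line of $PG(2,q^2)$ meets $\mathscr{U}_q$ in exactly $1$ or exactly $q+1$ points; lines meeting it in $q+1$ points are called secants, and $\mathscr{L}_q$ denotes the set of secants. The graph $H_q$ has vertex set $\{v_\ell : \ell \in \mathscr{L}_q\}$, with $v_{\ell_1} \sim v_{\ell_2}$ iff $\ell_1 \neq \ell_2$ and $\ell_1 \cap \ell_2 \in \mathscr{U}_q$. For each point $p \in \mathscr{U}_q$, let $C_p = \{v_\ell : p \in \ell \in \mathscr{L}_q\}$, and $\mathscr{C}_q = \{C_p : p \in \mathscr{U}_q\}$. *)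

theory Defs
  imports "HOL-Computational_Algebra.Primes"
begin

type_synonym 'a vec3 = "'a \<times> 'a \<times> 'a"

definition scale3 :: "'a::field \<Rightarrow> 'a vec3 \<Rightarrow> 'a vec3" where
  "scale3 c v = (case v of (x, y, z) \<Rightarrow> (c * x, c * y, c * z))"

definition dot3 :: "'a::field vec3 \<Rightarrow> 'a vec3 \<Rightarrow> 'a" where
  "dot3 u v = (case u of (a, b, c) \<Rightarrow> case v of (x, y, z) \<Rightarrow> a * x + b * y + c * z)"

definition proj_point :: "'a::field vec3 \<Rightarrow> 'a vec3 set" where
  "proj_point v = {scale3 c v | c. c \<noteq> 0}"

definition PG_points :: "'a::field vec3 set set" where
  "PG_points = {proj_point v | v. v \<noteq> (0, 0, 0)}"

definition proj_line :: "'a::field vec3 \<Rightarrow> 'a vec3 set set" where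
  "proj_line w = {proj_point v | v. v \<noteq> (0, 0, 0) \<and> dot3 w v = 0}"

definition PG_lines :: "'a::field vec3 set set set" where
  "PG_lines = {proj_line w | w. w \<noteq> (0, 0, 0)}"

text \<open>The Hermitian unital (q is the square root of the field order).\<close>
definition hermitian_unital :: "nat \<Rightarrow> 'a::field vec3 set set" where
  "hermitian_unital q = {proj_point (x, y, z) | x y z.
      (x, y, z) \<noteq> (0, 0, 0) \<and> x ^ (q + 1) + y ^ (q + 1) + z ^ (q + 1) = 0}"

definition secants :: "nat \<Rightarrow> 'a::field vec3 set set set" where
  "secants q = {l \<in> PG_lines. card (l \<inter> hermitian_unital q) = q + 1}"

text \<open>The graph H_q: vertices are the secants (v_l identified with l), adjacency
  iff distinct and their intersection point lies on the unital.\<close>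
definition H_adj :: "nat \<Rightarrow> 'a::field vec3 set set \<Rightarrow> 'a vec3 set set \<Rightarrow> bool" where
  "H_adj q l1 l2 \<longleftrightarrow> l1 \<in> secants q \<and> l2 \<in> secants q \<and> l1 \<noteq> l2 \<and>
      (\<exists>p \<in> hermitian_unital q. p \<in> l1 \<and> p \<in> l2)"

definition clique_at :: "nat \<Rightarrow> 'a::field vec3 set \<Rightarrow> 'a vec3 set set set" where
  "clique_at q p = {l \<in> secants q. p \<in> l}"

definition clique_family :: "nat \<Rightarrow> 'a::field vec3 set set set set" where
  "clique_family q = {clique_at q p | p. p \<in> hermitian_unital q}"

definition is_clique :: "nat \<Rightarrow> 'a::field vec3 set set set \<Rightarrow> bool" where
  "is_clique q C \<longleftrightarrow> C \<subseteq> secants q \<and> (\<forall>u\<in>C. \<forall>v\<in>C. u \<noteq> v \<longrightarrow> H_adj q u v)"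

definition is_maximal_clique :: "nat \<Rightarrow> 'a::field vec3 set set set \<Rightarrow> bool" where
  "is_maximal_clique q C \<longleftrightarrow> is_clique q C \<and>
     (\<forall>v \<in> secants q - C. \<not> (\<forall>u\<in>C. H_adj q u v))"

definition common_nbrs :: "nat \<Rightarrow> 'a::field vec3 set set \<Rightarrow> 'a vec3 set set \<Rightarrow> 'a vec3 set set set" where
  "common_nbrs q u v = {w \<in> secants q. H_adj q u w \<and> H_adj q v w}"

end

(*
  The unital U together with its secants is a Steiner system S(2, q + 1, q^3 + 1), H_q is
  its block graph, and C_p is the pencil of secants through p. Hence (a), (b) and (d) are
  double counting in a 2-design with block size k = q + 1 and replication number r = q^2;
  the only geometry needed is that U has q^3 + 1 points (isotropic vectors of
  h(u, v) = u . v^q are counted through the norm map, whose nonzero fibres over F_q have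
  q + 1 elements), that on the line through isotropic a, b the form becomes
  t |-> Tr (t h(b, a)), so a secant carries q + 1 points, and that two points of U span one
  secant.

  Part (c) is O'Nan's theorem: four secants meeting pairwise in U with no three concurrent
  would give isotropic a, b, c with det (a, b, c) /= 0 and isotropic points b + s c,
  c + t a, a + u b on one line. Menelaus gives s t u = -1, isotropy gives
  s^q h(b, c) = - s h(b, c)^q and its cyclic versions, and together these say that
  h(a, b) h(b, c) h(c, a) + its conjugate vanishes. By Cauchy-Binet that sum is
  det (a, b, c) det (a, b, c)^q, a contradiction.
*)

theory Submission
  imports Defs "HOL-Computational_Algebra.Polynomial" "HOL-Number_Theory.Residues"
    "HOL-Library.Product_Plus"
begin

lemma card_roots_power_add_linear_le:
  fixes b c :: "'a::idom"
  assumes "2 \<le> n"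
  shows "card {x. x ^ n + c * x + b = 0} \<le> n"
proof -
  define P where "P = Polynomial.monom 1 n + [:b, c:]"
  have "degree [:b, c:] < degree (Polynomial.monom (1::'a) n)"
    using assms by (simp add: degree_monom_eq le_less_trans[OF degree_pCons_le])
  then have deg: "degree P = n"
    using assms by (simp add: P_def degree_add_eq_left degree_monom_eq)
  then have "P \<noteq> 0"
    using assms by auto
  moreover have "{x. x ^ n + c * x + b = 0} = {x. poly P x = 0}"
    by (simp add: P_def poly_monom algebra_simps)
  ultimately show ?thesis
    using card_poly_roots_bound[of P] deg by simp
qed

lemma card_fibre_eq_of_bounded:
  assumes "finite A" "finite S" "f ` A \<subseteq> S" "card S \<le> n" "card A = m * n"
    and fibre_le: "\<And>z. z \<in> S \<Longrightarrow> card {x\<in>A. f x = z} \<le> m" and "y \<in> S"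
  shows "card {x\<in>A. f x = y} = m"
proof (rule ccontr)
  assume "card {x\<in>A. f x = y} \<noteq> m"
  then have less: "card {x\<in>A. f x = y} < m"
    using fibre_le[OF \<open>y \<in> S\<close>] by simp
  have "A = (\<Union>z\<in>S. {x\<in>A. f x = z})"
    using assms(3) by blast
  also have "card \<dots> = (\<Sum>z\<in>S. card {x\<in>A. f x = z})"
    by (rule card_UN_disjoint) (use assms(1,2) in auto)
  finally have "card A = (\<Sum>z\<in>S. card {x\<in>A. f x = z})" .
  also have "\<dots> < (\<Sum>z\<in>S. m)"
    using assms(2,7) fibre_le less by (intro sum_strict_mono_ex1) auto
  also have "\<dots> \<le> m * n"
    using assms(4) by simp
  finally show False
    using assms(5) by simp
qed

section \<open>Steiner systems and their block graphs\<close>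

text \<open>Blocks are arbitrary sets, of which only the traces on the point set \<open>U\<close> matter, so that
  lines of a projective plane can serve as blocks directly. The replication number \<open>r\<close> is
  determined by the other data; it is a parameter only so that it can be instantiated by a
  closed form.\<close>

locale steiner_system =
  fixes U :: "'p set" and B :: "'p set set" and k r :: nat
  assumes finite_points: "finite U" and finite_blocks: "finite B"
    and two_le_k: "2 \<le> k"
    and card_block: "l \<in> B \<Longrightarrow> card (l \<inter> U) = k"
    and ex1_block: "x \<in> U \<Longrightarrow> y \<in> U \<Longrightarrow> x \<noteq> y \<Longrightarrow> \<exists>!l. l \<in> B \<and> x \<in> l \<and> y \<in> l"
    and replication: "r * (k - 1) = card U - 1"
begin

definition join :: "'p \<Rightarrow> 'p \<Rightarrow> 'p set" where
  "join x y = (THE l. l \<in> B \<and> x \<in> l \<and> y \<in> l)"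

definition pencil :: "'p \<Rightarrow> 'p set set" where
  "pencil x = {l \<in> B. x \<in> l}"

definition adjacent :: "'p set \<Rightarrow> 'p set \<Rightarrow> bool" where
  "adjacent l m \<longleftrightarrow> l \<in> B \<and> m \<in> B \<and> l \<noteq> m \<and> (\<exists>x\<in>U. x \<in> l \<and> x \<in> m)"

definition transversals :: "'p set \<Rightarrow> 'p set \<Rightarrow> 'p set set" where
  "transversals l m =
     {n \<in> B. (\<exists>y\<in>U. y \<in> l \<and> y \<notin> m \<and> y \<in> n) \<and> (\<exists>z\<in>U. z \<in> m \<and> z \<notin> l \<and> z \<in> n)}"

lemma join:
  assumes "x \<in> U" "y \<in> U" "x \<noteq> y"
  shows "join x y \<in> B" "x \<in> join x y" "y \<in> join x y"
  using theI'[OF ex1_block[OF assms]] by (simp_all add: join_def)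

lemma join_unique:
  assumes "x \<in> U" "y \<in> U" "x \<noteq> y" "l \<in> B" "x \<in> l" "y \<in> l"
  shows "l = join x y"
  using the1_equality[OF ex1_block[OF assms(1-3)]] assms(4-6) by (simp add: join_def)

lemma block_meet_unique:
  assumes "l \<in> B" "m \<in> B" "l \<noteq> m" "x \<in> U" "y \<in> U" "x \<in> l" "x \<in> m" "y \<in> l" "y \<in> m"
  shows "x = y"
  using assms join_unique by metis

lemma finite_pencil: "finite (pencil x)"
  using finite_blocks by (simp add: pencil_def)

lemma card_pencil_mult:
  assumes "x \<in> U"
  shows "card (pencil x) * (k - 1) = card U - 1"
proof -
  have "card U - 1 = card (U - {x})"
    using assms finite_points by (simp add: card_Diff_singleton)
  also have "U - {x} = (\<Union>l\<in>pencil x. l \<inter> U - {x})"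
    using assms join by (auto simp: pencil_def) blast
  also have "card \<dots> = (\<Sum>l\<in>pencil x. card (l \<inter> U - {x}))"
  proof (rule card_UN_disjoint)
    show "\<forall>l\<in>pencil x. \<forall>m\<in>pencil x. l \<noteq> m \<longrightarrow> (l \<inter> U - {x}) \<inter> (m \<inter> U - {x}) = {}"
      using block_meet_unique assms unfolding pencil_def by blast
  qed (use finite_pencil finite_points in auto)
  also have "\<dots> = (\<Sum>l\<in>pencil x. k - 1)"
    using assms card_block finite_points by (intro sum.cong) (simp_all add: pencil_def card_Diff_singleton)
  finally show ?thesis
    by simp
qed

lemma card_pencil:
  assumes "x \<in> U"
  shows "card (pencil x) = r"
proof -
  have "card (pencil x) * (k - 1) = r * (k - 1)"
    using card_pencil_mult[OF assms] replication by simp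
  then show ?thesis
    using two_le_k by simp
qed

lemma card_blocks: "card B * k = card U * r"
proof -
  have "(\<Sum>x\<in>U. card {l\<in>B. x \<in> l}) = (\<Sum>l\<in>B. card {x\<in>U. x \<in> l})"
    using finite_points finite_blocks by (intro sum_multicount_gen) auto
  moreover have "card {x\<in>U. x \<in> l} = k" if "l \<in> B" for l
    using card_block[OF that] by (simp add: Int_def conj_commute)
  ultimately show ?thesis
    using card_pencil by (simp add: pencil_def mult.commute)
qed

lemma card_adjacent:
  assumes "l \<in> B"
  shows "card {m. adjacent l m} = k * (r - 1)"
proof -
  have "{m. adjacent l m} = (\<Union>x\<in>l \<inter> U. pencil x - {l})"
    using assms by (auto simp: adjacent_def pencil_def)
  moreover have "card (\<Union>x\<in>l \<inter> U. pencil x - {l}) = (\<Sum>x\<in>l \<inter> U. card (pencil x - {l}))"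
  proof (rule card_UN_disjoint)
    show "\<forall>x\<in>l \<inter> U. \<forall>y\<in>l \<inter> U. x \<noteq> y \<longrightarrow> (pencil x - {l}) \<inter> (pencil y - {l}) = {}"
      using block_meet_unique assms unfolding pencil_def by blast
  qed (use finite_pencil finite_points in auto)
  moreover have "card (pencil x - {l}) = r - 1" if "x \<in> l \<inter> U" for x
    using that assms card_pencil finite_pencil by (simp add: pencil_def card_Diff_singleton)
  ultimately show ?thesis
    using card_block[OF assms] by simp
qed

lemma adjacent_meet:
  assumes "adjacent l m"
  obtains x where "U \<inter> l \<inter> m = {x}"
proof -
  obtain x where "x \<in> U" "x \<in> l" "x \<in> m"
    using assms by (auto simp: adjacent_def)
  moreover have "y = x" if "y \<in> U" "y \<in> l" "y \<in> m" for y
    using assms that calculation block_meet_unique by (auto simp: adjacent_def)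
  ultimately show thesis
    using that by blast
qed

lemma pencil_subset_blocks: "pencil x \<subseteq> B"
  by (auto simp: pencil_def)

lemma adjacent_in_pencil:
  assumes "x \<in> U" "l \<in> pencil x" "m \<in> pencil x" "l \<noteq> m"
  shows "adjacent l m"
  using assms by (auto simp: pencil_def adjacent_def)

lemma pencil_maximal:
  assumes "k < r" "x \<in> U" "m \<in> B" "m \<notin> pencil x"
  shows "\<exists>l\<in>pencil x. \<not> adjacent l m"
proof (rule ccontr)
  assume "\<not> ?thesis"
  then have meets: "\<exists>y. y \<in> U \<and> y \<in> l \<and> y \<in> m" if "l \<in> pencil x" for l
    using that by (auto simp: adjacent_def)
  define f where "f l = (SOME y. y \<in> U \<and> y \<in> l \<and> y \<in> m)" for l
  have f: "f l \<in> U \<and> f l \<in> l \<and> f l \<in> m" if "l \<in> pencil x" for l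
    using someI_ex[OF meets[OF that]] by (simp add: f_def)
  have "x \<notin> m"
    using assms(3,4) by (simp add: pencil_def)
  have "inj_on f (pencil x)"
  proof (rule inj_onI)
    fix l l' assume l: "l \<in> pencil x" "l' \<in> pencil x" "f l = f l'"
    show "l = l'"
    proof (rule ccontr)
      assume "l \<noteq> l'"
      with l f[OF l(1)] f[OF l(2)] assms(2) have "x = f l"
        by (intro block_meet_unique[of l l']) (auto simp: pencil_def)
      with f[OF l(1)] \<open>x \<notin> m\<close> show False
        by simp
    qed
  qed
  moreover have "f ` pencil x \<subseteq> m \<inter> U"
    using f by auto
  ultimately have "card (pencil x) \<le> card (m \<inter> U)"
    using finite_points by (intro card_inj_on_le) auto
  with assms(1-3) show False
    by (simp add: card_pencil card_block)
qed

lemma pencil_Int_pencil: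
  assumes "x \<in> U" "y \<in> U" "x \<noteq> y"
  shows "pencil x \<inter> pencil y = {join x y}"
proof -
  have "l \<in> pencil x \<inter> pencil y \<longleftrightarrow> l = join x y" for l
    using join[OF assms] join_unique[OF assms, of l] unfolding pencil_def by blast
  then show ?thesis
    by blast
qed

lemma card_Int_pencils:
  assumes "C1 \<in> pencil ` U" "C2 \<in> pencil ` U" "C1 \<noteq> C2"
  shows "card (C1 \<inter> C2) = 1"
proof -
  obtain x y where "x \<in> U" "y \<in> U" "C1 = pencil x" "C2 = pencil y"
    using assms(1,2) by blast
  moreover from this assms(3) have "x \<noteq> y"
    by blast
  ultimately show ?thesis
    by (simp add: pencil_Int_pencil)
qed

lemma inj_on_pencil:
  assumes "1 < r"
  shows "inj_on pencil U"
proof (rule inj_onI, rule ccontr)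
  fix x y assume "x \<in> U" "y \<in> U" "pencil x = pencil y" "x \<noteq> y"
  then have "pencil x = {join x y}"
    using pencil_Int_pencil[of x y] by simp
  with assms card_pencil[OF \<open>x \<in> U\<close>] show False
    by simp
qed

lemma card_pencils_containing:
  assumes "1 < r" "l \<in> B"
  shows "card {C \<in> pencil ` U. l \<in> C} = k"
proof -
  have "{C \<in> pencil ` U. l \<in> C} = pencil ` (l \<inter> U)"
    using assms(2) by (auto simp: pencil_def)
  moreover have "inj_on pencil (l \<inter> U)"
    using inj_on_pencil[OF assms(1)] by (rule inj_on_subset) simp
  ultimately show ?thesis
    using assms(2) by (simp add: card_image card_block)
qed

lemma card_pencils_containing_adjacent:
  assumes "adjacent l m"
  shows "card {C \<in> pencil ` U. l \<in> C \<and> m \<in> C} = 1"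
proof -
  obtain x where x: "U \<inter> l \<inter> m = {x}"
    using assms by (rule adjacent_meet)
  have "{C \<in> pencil ` U. l \<in> C \<and> m \<in> C} = {pencil x}"
  proof (intro equalityI subsetI)
    fix C assume "C \<in> {C \<in> pencil ` U. l \<in> C \<and> m \<in> C}"
    then obtain y where "y \<in> U" "y \<in> l" "y \<in> m" "C = pencil y"
      by (auto simp: pencil_def)
    moreover from this(1-3) x have "y = x"
      by blast
    ultimately show "C \<in> {pencil x}"
      by simp
  next
    have "x \<in> U" "l \<in> pencil x" "m \<in> pencil x"
      using x assms by (auto simp: pencil_def adjacent_def)
    then show "C \<in> {C \<in> pencil ` U. l \<in> C \<and> m \<in> C}" if "C \<in> {pencil x}" for C
      using that by blast
  qed
  then show ?thesis
    by simp
qed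

lemma inj_on_join_transversal:
  assumes "l \<in> B" "m \<in> B"
  shows "inj_on (\<lambda>(y, z). join y z) ((l \<inter> U - m) \<times> (m \<inter> U - l))"
proof (rule inj_onI, clarsimp)
  fix y z y' z'
  assume y: "y \<in> l" "y \<in> U" "y \<notin> m" "y' \<in> l" "y' \<in> U" "y' \<notin> m"
    and z: "z \<in> m" "z \<in> U" "z \<notin> l" "z' \<in> m" "z' \<in> U" "z' \<notin> l"
    and eq: "join y z = join y' z'"
  have yz: "y \<noteq> z" "y' \<noteq> z'"
    using y z by auto
  note n = join[OF y(2) z(2) yz(1)] and n' = join[OF y(5) z(5) yz(2)]
  have "join y z \<noteq> l" "join y z \<noteq> m"
    using n y z by auto
  then show "y = y' \<and> z = z'"
    using block_meet_unique[of l "join y z"] block_meet_unique[of m "join y z"]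
      n n' eq y z assms by metis
qed

lemma join_image_transversal:
  "(\<lambda>(y, z). join y z) ` ((l \<inter> U - m) \<times> (m \<inter> U - l)) = transversals l m"
proof (intro equalityI subsetI)
  fix n assume "n \<in> (\<lambda>(y, z). join y z) ` ((l \<inter> U - m) \<times> (m \<inter> U - l))"
  then obtain y z where "y \<in> l \<inter> U - m" "z \<in> m \<inter> U - l" "n = join y z"
    by blast
  moreover from this have "y \<noteq> z"
    by blast
  ultimately show "n \<in> transversals l m"
    using join[of y z] unfolding transversals_def by blast
next
  fix n assume "n \<in> transversals l m"
  then obtain y z where "n \<in> B" "y \<in> l \<inter> U - m" "z \<in> m \<inter> U - l" "y \<in> n" "z \<in> n"
    unfolding transversals_def by blast
  moreover from this have "n = join y z"
    by (intro join_unique) auto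
  ultimately show "n \<in> (\<lambda>(y, z). join y z) ` ((l \<inter> U - m) \<times> (m \<inter> U - l))"
    by blast
qed

lemma card_transversals:
  assumes "l \<in> B" "m \<in> B"
  shows "card (transversals l m) = card (l \<inter> U - m) * card (m \<inter> U - l)"
  using card_image[OF inj_on_join_transversal[OF assms]]
  by (simp add: join_image_transversal card_cartesian_product)

lemma card_common_neighbours_nonadjacent:
  assumes "l \<in> B" "m \<in> B" "l \<noteq> m" "\<not> adjacent l m"
  shows "card {n \<in> B. adjacent l n \<and> adjacent m n} = k ^ 2"
proof -
  have disj: "y \<notin> m" if "y \<in> U" "y \<in> l" for y
    using assms that by (auto simp: adjacent_def)
  have "{n \<in> B. adjacent l n \<and> adjacent m n} = transversals l m"
    using assms disj by (auto simp: adjacent_def transversals_def)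
  moreover have "l \<inter> U - m = l \<inter> U" "m \<inter> U - l = m \<inter> U"
    using disj by auto
  ultimately show ?thesis
    using assms by (simp add: card_transversals card_block power2_eq_square)
qed

lemma common_neighbours_adjacent_eq:
  assumes "adjacent l m" "U \<inter> l \<inter> m = {x}"
  shows "{n \<in> B. adjacent l n \<and> adjacent m n} = (pencil x - {l, m}) \<union> transversals l m"
proof (intro equalityI subsetI)
  fix n assume n: "n \<in> {n \<in> B. adjacent l n \<and> adjacent m n}"
  show "n \<in> (pencil x - {l, m}) \<union> transversals l m"
  proof (cases "x \<in> n")
    case True
    with n show ?thesis
      by (auto simp: pencil_def adjacent_def)
  next
    case False
    from n obtain y z where "n \<in> B" "y \<in> U" "y \<in> l" "y \<in> n" "z \<in> U" "z \<in> m" "z \<in> n"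
      by (auto simp: adjacent_def)
    moreover from this False assms(2) have "y \<notin> m" "z \<notin> l"
      by (auto simp: set_eq_iff)
    ultimately show ?thesis
      unfolding transversals_def by blast
  qed
next
  fix n assume "n \<in> (pencil x - {l, m}) \<union> transversals l m"
  then consider "n \<in> pencil x" "n \<noteq> l" "n \<noteq> m" | "n \<in> transversals l m"
    by blast
  then show "n \<in> {n \<in> B. adjacent l n \<and> adjacent m n}"
  proof cases
    case 1
    with assms show ?thesis
      by (auto simp: pencil_def adjacent_def)
  next
    case 2
    then obtain y z where "n \<in> B" "y \<in> U" "y \<in> l" "y \<notin> m" "y \<in> n" "z \<in> U" "z \<in> m" "z \<notin> l" "z \<in> n"
      unfolding transversals_def by blast
    moreover from this have "n \<noteq> l" "n \<noteq> m"
      by blast+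
    ultimately show ?thesis
      using assms(1) unfolding adjacent_def by blast
  qed
qed

lemma pencil_Int_transversals:
  assumes "l \<in> B" "x \<in> U" "x \<in> l" "x \<in> m"
  shows "pencil x \<inter> transversals l m = {}"
proof (rule ccontr)
  assume "pencil x \<inter> transversals l m \<noteq> {}"
  then obtain n y z where "n \<in> B" "x \<in> n" "y \<in> U" "y \<in> l" "y \<notin> m" "y \<in> n" "z \<notin> l" "z \<in> n"
    unfolding transversals_def pencil_def by blast
  moreover from this have "n \<noteq> l"
    by blast
  ultimately show False
    using block_meet_unique[of l n x y] assms by blast
qed

lemma card_common_neighbours_adjacent:
  assumes "adjacent l m"
  shows "card {n \<in> B. adjacent l n \<and> adjacent m n} = (r - 2) + (k - 1) ^ 2"
proof -
  obtain x where meet: "U \<inter> l \<inter> m = {x}"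
    using assms by (rule adjacent_meet)
  then have x: "x \<in> U" "x \<in> l" "x \<in> m"
    by blast+
  have lm: "l \<in> B" "m \<in> B" "l \<noteq> m"
    using assms by (auto simp: adjacent_def)
  have "card (pencil x - {l, m}) = r - 2"
  proof -
    have "{l, m} \<subseteq> pencil x"
      using x lm by (simp add: pencil_def)
    then show ?thesis
      using lm finite_pencil card_pencil[OF x(1)] by (simp add: card_Diff_subset)
  qed
  moreover have "l \<inter> U - m = l \<inter> U - {x}" "m \<inter> U - l = m \<inter> U - {x}"
    using meet by (auto simp: set_eq_iff)
  then have "card (transversals l m) = (k - 1) ^ 2"
    using lm x finite_points by (simp add: card_transversals card_block card_Diff_singleton power2_eq_square)
  moreover have "finite (transversals l m)"
    using finite_blocks by (simp add: transversals_def)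
  moreover have "(pencil x - {l, m}) \<inter> transversals l m = {}"
    using pencil_Int_transversals[OF lm(1) x] by blast
  ultimately show ?thesis
    using finite_pencil by (simp add: common_neighbours_adjacent_eq[OF assms meet] card_Un_disjoint)
qed

end

section \<open>Vectors and the projective plane\<close>

lemma scale3_simp [simp]: "scale3 c (x, y, z) = (c * x, c * y, c * z)"
  by (simp add: scale3_def)

lemma dot3_simp [simp]: "dot3 (a, b, c) (x, y, z) = a * x + b * y + c * z"
  by (simp add: dot3_def)

definition cross :: "'a::field vec3 \<Rightarrow> 'a vec3 \<Rightarrow> 'a vec3" where
  "cross u v = (case u of (a1, a2, a3) \<Rightarrow> case v of (b1, b2, b3) \<Rightarrow>
     (a2 * b3 - a3 * b2, a3 * b1 - a1 * b3, a1 * b2 - a2 * b1))"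

lemma cross_simp [simp]:
  "cross (a1, a2, a3) (b1, b2, b3) = (a2 * b3 - a3 * b2, a3 * b1 - a1 * b3, a1 * b2 - a2 * b1)"
  by (simp add: cross_def)

definition det3 :: "'a::field vec3 \<Rightarrow> 'a vec3 \<Rightarrow> 'a vec3 \<Rightarrow> 'a" where
  "det3 a b c = dot3 (cross a b) c"

lemma dot3_zero_left [simp]: "dot3 (0, 0, 0) v = 0"
  by (cases v) simp

lemma scale3_0_left [simp]: "scale3 0 v = (0, 0, 0)"
  by (cases v) simp

lemma scale3_eq_0_iff: "scale3 c v = (0, 0, 0) \<longleftrightarrow> c = 0 \<or> v = (0, 0, 0)"
  by (cases v) auto

lemma scale3_scale3: "scale3 c (scale3 d v) = scale3 (c * d) v"
  by (cases v) (simp add: mult.assoc)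

lemma dot3_commute: "dot3 u v = dot3 v u"
  by (cases u, cases v) (simp add: mult.commute)

lemma dot3_scale3_right: "dot3 w (scale3 c v) = c * dot3 w v"
  by (cases v, cases w) (simp add: algebra_simps)

lemma dot3_scale3_left: "dot3 (scale3 c w) v = c * dot3 w v"
  by (cases v, cases w) (simp add: algebra_simps)

lemma cross_scale3_left: "cross (scale3 c u) v = scale3 c (cross u v)"
  by (cases u, cases v) (simp add: algebra_simps)

lemma cross_scale3_right: "cross u (scale3 c v) = scale3 c (cross u v)"
  by (cases u, cases v) (simp add: algebra_simps)

lemma cross_self: "cross u u = (0, 0, 0)"
  by (cases u) (simp add: algebra_simps)

lemma cross_commute: "cross v u = scale3 (- 1) (cross u v)"
  by (cases u, cases v) (simp add: algebra_simps)

lemma dot3_cross_left: "dot3 (cross a b) a = 0" and dot3_cross_right: "dot3 (cross a b) b = 0"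
  by (cases a, cases b, simp add: algebra_simps)+

lemma cross_cross: "cross w (cross a b) = scale3 (dot3 w b) a + scale3 (- dot3 w a) b"
  by (cases a, cases b, cases w) (simp add: algebra_simps)

lemma cross_cross_cross:
  "cross (cross a b) (cross c d) = scale3 (det3 a b d) c + scale3 (- det3 a b c) d"
  by (cases a, cases b, cases c, cases d) (simp add: det3_def algebra_simps)

lemma det3_rotate: "det3 b c a = det3 a b c"
  by (cases a, cases b, cases c) (simp add: det3_def algebra_simps)

lemma det3_menelaus:
  "det3 (c + scale3 t a) (a + scale3 u b) (b + scale3 s c) = (1 + s * t * u) * det3 a b c"
  by (cases a, cases b, cases c) (simp add: det3_def algebra_simps)

lemma det3_mult_det3:
  "det3 a b c * det3 x y z =
     dot3 a x * (dot3 b y * dot3 c z - dot3 b z * dot3 c y)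
   - dot3 a y * (dot3 b x * dot3 c z - dot3 b z * dot3 c x)
   + dot3 a z * (dot3 b x * dot3 c y - dot3 b y * dot3 c x)"
  by (cases a, cases b, cases c, cases x, cases y, cases z) (simp add: det3_def algebra_simps)

lemma cross_eq_0_imp_parallel:
  assumes "cross w v = (0, 0, 0)" "v \<noteq> (0, 0, 0)"
  obtains c where "w = scale3 c v"
proof -
  obtain w1 w2 w3 v1 v2 v3 where w: "w = (w1, w2, w3)" and v: "v = (v1, v2, v3)"
    by (cases w, cases v)
  have e: "w2 * v3 = w3 * v2" "w3 * v1 = w1 * v3" "w1 * v2 = w2 * v1"
    using assms(1) by (auto simp: w v)
  consider "v1 \<noteq> 0" | "v2 \<noteq> 0" | "v3 \<noteq> 0"
    using assms(2) v by auto
  then show thesis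
  proof cases
    case 1
    with e have "w = scale3 (w1 / v1) v" by (simp add: w v field_simps; metis mult.commute)
    then show thesis by (rule that)
  next
    case 2
    with e have "w = scale3 (w2 / v2) v" by (simp add: w v field_simps; metis mult.commute)
    then show thesis by (rule that)
  next
    case 3
    with e have "w = scale3 (w3 / v3) v" by (simp add: w v field_simps; metis mult.commute)
    then show thesis by (rule that)
  qed
qed

lemma det3_eq_0_imp_span:
  assumes "cross a b \<noteq> (0, 0, 0)" "det3 a b v = 0"
  obtains \<alpha> \<beta> where "v = scale3 \<alpha> a + scale3 \<beta> b"
proof -
  have "det3 v b a = 0"
    using assms(2) by (cases a, cases b, cases v) (simp add: det3_def algebra_simps)
  then have "cross (cross v b) (cross a b) = (0, 0, 0)"
    by (simp add: cross_cross_cross det3_def dot3_cross_right)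
  then obtain \<alpha> where "cross v b = scale3 \<alpha> (cross a b)"
    using assms(1) by (rule cross_eq_0_imp_parallel)
  then have "cross (v + scale3 (- \<alpha>) a) b = (0, 0, 0)"
    by (cases a, cases b, cases v) (simp add: algebra_simps)
  moreover have "b \<noteq> (0, 0, 0)"
    using assms(1) by (cases a) auto
  ultimately obtain \<beta> where "v + scale3 (- \<alpha>) a = scale3 \<beta> b"
    by (blast elim: cross_eq_0_imp_parallel)
  then have "v = scale3 \<alpha> a + scale3 \<beta> b"
    by (cases a, cases b, cases v) (simp add: algebra_simps)
  then show thesis by (rule that)
qed

lemma det3_eq_0_of_orthogonal:
  assumes "w \<noteq> (0, 0, 0)" "dot3 w d = 0" "dot3 w e = 0" "dot3 w f = 0"
  shows "det3 e f d = 0"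
proof -
  have "cross (cross e f) w = scale3 (-1) (cross w (cross e f))"
    by (rule cross_commute)
  also have "\<dots> = (0, 0, 0)"
    using assms(3,4) by (simp add: cross_cross)
  finally obtain c where "cross e f = scale3 c w"
    using assms(1) by (blast elim: cross_eq_0_imp_parallel)
  then show ?thesis
    using assms(2) by (simp add: det3_def dot3_commute[of "scale3 c w"] dot3_scale3_right dot3_commute[of w])
qed

lemma mem_proj_point: "u \<in> proj_point v \<longleftrightarrow> (\<exists>c. c \<noteq> 0 \<and> u = scale3 c v)"
  by (auto simp: proj_point_def)

lemma proj_point_self: "v \<in> proj_point v"
  unfolding mem_proj_point by (intro exI[of _ 1]) (cases v, simp)

lemma proj_point_scale3:
  assumes "c \<noteq> 0"
  shows "proj_point (scale3 c v) = proj_point v"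
proof (intro equalityI subsetI)
  fix u assume "u \<in> proj_point (scale3 c v)"
  then obtain d where "d \<noteq> 0" "u = scale3 (d * c) v"
    by (auto simp: mem_proj_point scale3_scale3)
  with assms show "u \<in> proj_point v"
    unfolding mem_proj_point by (intro exI[of _ "d * c"]) simp
next
  fix u assume "u \<in> proj_point v"
  then obtain d where "d \<noteq> 0" "u = scale3 (d / c) (scale3 c v)"
    using assms by (auto simp: mem_proj_point scale3_scale3)
  with assms show "u \<in> proj_point (scale3 c v)"
    unfolding mem_proj_point by (intro exI[of _ "d / c"]) simp
qed

lemma proj_point_eq_iff:
  assumes "v \<noteq> (0, 0, 0)" "w \<noteq> (0, 0, 0)"
  shows "proj_point v = proj_point w \<longleftrightarrow> cross v w = (0, 0, 0)"
proof
  assume "proj_point v = proj_point w"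
  then have "w \<in> proj_point v"
    using proj_point_self[of w] by simp
  then obtain c where "w = scale3 c v"
    by (auto simp: mem_proj_point)
  then show "cross v w = (0, 0, 0)"
    by (simp add: cross_commute[of v] cross_scale3_left cross_self)
next
  assume "cross v w = (0, 0, 0)"
  then obtain c where c: "v = scale3 c w"
    using assms(2) by (rule cross_eq_0_imp_parallel)
  with assms(1) have "c \<noteq> 0"
    by auto
  with c show "proj_point v = proj_point w"
    by (simp add: proj_point_scale3)
qed

lemma mem_proj_line_iff:
  assumes "v \<noteq> (0, 0, 0)"
  shows "proj_point v \<in> proj_line w \<longleftrightarrow> dot3 w v = 0"
proof
  assume "proj_point v \<in> proj_line w"
  then obtain u where "dot3 w u = 0" "proj_point v = proj_point u"
    by (auto simp: proj_line_def)
  moreover from this(2) have "v \<in> proj_point u"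
    using proj_point_self[of v] by simp
  then obtain c where "v = scale3 c u"
    by (auto simp: mem_proj_point)
  ultimately show "dot3 w v = 0"
    by (simp add: dot3_scale3_right)
qed (use assms in \<open>unfold proj_line_def, blast\<close>)

lemma PG_line_through:
  assumes "l \<in> PG_lines" "a \<noteq> (0, 0, 0)" "b \<noteq> (0, 0, 0)" "proj_point a \<noteq> proj_point b"
    and "proj_point a \<in> l" "proj_point b \<in> l"
  shows "cross a b \<noteq> (0, 0, 0)" "l = proj_line (cross a b)"
proof -
  show ab: "cross a b \<noteq> (0, 0, 0)"
    using assms(2-4) by (simp add: proj_point_eq_iff)
  obtain w where w: "w \<noteq> (0, 0, 0)" "l = proj_line w"
    using assms(1) by (auto simp: PG_lines_def)
  with assms(2,3,5,6) have "dot3 w a = 0" "dot3 w b = 0"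
    by (simp_all add: mem_proj_line_iff)
  then have "cross w (cross a b) = (0, 0, 0)"
    by (simp add: cross_cross)
  then obtain c where c: "w = scale3 c (cross a b)"
    using ab by (rule cross_eq_0_imp_parallel)
  with w(1) have "c \<noteq> 0"
    by auto
  with c w(2) show "l = proj_line (cross a b)"
    by (simp add: proj_line_def dot3_scale3_left)
qed

lemma cross_line_param: "cross (a + scale3 s b) (a + scale3 t b) = scale3 (t - s) (cross a b)"
  and cross_line_param_right: "cross (a + scale3 t b) b = cross a b"
  by (cases a, cases b, simp add: algebra_simps)+

lemma line_param_nonzero:
  assumes "cross a b \<noteq> (0, 0, 0)"
  shows "a + scale3 t b \<noteq> (0, 0, 0)"
  using assms cross_line_param_right[of a t b] by (cases b) auto

lemma proj_line_cross_eq: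
  assumes "cross a b \<noteq> (0, 0, 0)"
  shows "proj_line (cross a b) = insert (proj_point b) (range (\<lambda>t. proj_point (a + scale3 t b)))"
proof (intro equalityI subsetI)
  fix P assume "P \<in> proj_line (cross a b)"
  then obtain v where v: "v \<noteq> (0, 0, 0)" "det3 a b v = 0" "P = proj_point v"
    by (auto simp: proj_line_def det3_def)
  obtain \<alpha> \<beta> where v_eq: "v = scale3 \<alpha> a + scale3 \<beta> b"
    using assms v(2) by (rule det3_eq_0_imp_span)
  show "P \<in> insert (proj_point b) (range (\<lambda>t. proj_point (a + scale3 t b)))"
  proof (cases "\<alpha> = 0")
    case True
    with v_eq have "v = scale3 \<beta> b"
      by (cases b) simp
    moreover from this v(1) have "\<beta> \<noteq> 0"
      by auto
    ultimately show ?thesis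
      using v(3)
      by (simp add: proj_point_scale3)
  next
    case False
    then have "v = scale3 \<alpha> (a + scale3 (\<beta> / \<alpha>) b)"
      using v_eq by (cases a, cases b) (simp add: algebra_simps)
    with False v(3) show ?thesis
      by (simp add: proj_point_scale3)
  qed
next
  have "dot3 (cross a b) (a + scale3 t b) = 0" for t
    by (cases a, cases b) (simp add: algebra_simps)
  moreover have "b \<noteq> (0, 0, 0)"
    using assms by (cases a) auto
  ultimately show "P \<in> proj_line (cross a b)"
    if "P \<in> insert (proj_point b) (range (\<lambda>t. proj_point (a + scale3 t b)))" for P
    using that mem_proj_line_iff[OF line_param_nonzero[OF assms], where w = "cross a b"]
      mem_proj_line_iff[of b "cross a b"] by (auto simp: dot3_cross_right)
qed

lemma inj_line_param:
  assumes "cross a b \<noteq> (0, 0, 0)"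
  shows "inj (\<lambda>t. proj_point (a + scale3 t b))"
proof (rule injI)
  fix s t assume "proj_point (a + scale3 s b) = proj_point (a + scale3 t b)"
  then have "scale3 (t - s) (cross a b) = (0, 0, 0)"
    using line_param_nonzero[OF assms] by (simp add: proj_point_eq_iff cross_line_param)
  with assms show "s = t"
    by (simp add: scale3_eq_0_iff)
qed

lemma line_param_neq:
  assumes "cross a b \<noteq> (0, 0, 0)"
  shows "proj_point (a + scale3 t b) \<noteq> proj_point b"
proof -
  have "b \<noteq> (0, 0, 0)"
    using assms by (cases a) auto
  with assms show ?thesis
    using line_param_nonzero[OF assms] by (simp add: proj_point_eq_iff cross_line_param_right)
qed

lemma card_proj_point:
  fixes v :: "'a::{finite, field} vec3"
  assumes "v \<noteq> (0, 0, 0)"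
  shows "card (proj_point v) = card (UNIV :: 'a set) - 1"
proof -
  have "proj_point v = (\<lambda>c. scale3 c v) ` (UNIV - {0})"
    by (auto simp: proj_point_def)
  moreover have "inj (\<lambda>c. scale3 c v)"
    using assms by (cases v) (auto intro: injI)
  ultimately show ?thesis
    by (simp add: card_image inj_on_subset card_Diff_singleton)
qed

lemma card_scale_closed:
  fixes V :: "'a::{finite, field} vec3 set"
  assumes "(0, 0, 0) \<notin> V" and closed: "\<And>c v. c \<noteq> 0 \<Longrightarrow> v \<in> V \<Longrightarrow> scale3 c v \<in> V"
  shows "card V = card (proj_point ` V) * (card (UNIV :: 'a set) - 1)"
proof -
  have "\<Union> (proj_point ` V) \<subseteq> V"
    using closed by (auto simp: mem_proj_point)
  moreover have "V \<subseteq> \<Union> (proj_point ` V)"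
    using proj_point_self by blast
  moreover have "pairwise disjnt (proj_point ` V)"
  proof (rule pairwiseI)
    fix P Q assume PQ: "P \<in> proj_point ` V" "Q \<in> proj_point ` V" "P \<noteq> Q"
    have "P = proj_point u" if "P \<in> proj_point ` V" "u \<in> P" for P u
    proof -
      from that obtain v c where "P = proj_point v" "c \<noteq> 0" "u = scale3 c v"
        by (auto simp: mem_proj_point)
      then show ?thesis
        by (simp add: proj_point_scale3)
    qed
    with PQ show "disjnt P Q"
      unfolding disjnt_def by blast
  qed
  ultimately have "card V = sum card (proj_point ` V)"
    using card_Union_disjoint[of "proj_point ` V"] by (simp add: subset_antisym)
  also have "\<dots> = (\<Sum>P\<in>proj_point ` V. card (UNIV :: 'a set) - 1)"
  proof (rule sum.cong)
    fix P assume "P \<in> proj_point ` V"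
    then obtain v where "v \<in> V" "P = proj_point v"
      by (rule imageE)
    moreover from this(1) assms(1) have "v \<noteq> (0, 0, 0)"
      by metis
    ultimately show "card P = card (UNIV :: 'a set) - 1"
      by (simp add: card_proj_point)
  qed simp
  finally show ?thesis
    by simp
qed

section \<open>The field with \<open>q\<^sup>2\<close> elements\<close>

text \<open>The library version \<open>finite_field_power_card_eq_same\<close> needs the sort \<open>finite_field\<close>.\<close>

lemma power_card_UNIV_eq_self:
  fixes x :: "'a::{finite, field}"
  shows "x ^ card (UNIV :: 'a set) = x"
proof (cases "x = 0")
  case False
  have "(\<Prod>y\<in>UNIV - {0}. x * y) = (\<Prod>y\<in>UNIV - {0}. y)"
    by (rule prod.reindex_bij_witness[of _ "\<lambda>y. y / x" "\<lambda>y. x * y"]) (use False in auto)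
  then have "x ^ (card (UNIV :: 'a set) - 1) = 1"
    by (simp add: prod.distrib card_Diff_singleton)
  moreover have "card (UNIV :: 'a set) = Suc (card (UNIV :: 'a set) - 1)"
    using finite_UNIV_card_ge_0[where 'a = 'a] by simp
  ultimately show ?thesis
    by (metis power_Suc2 mult_1)
qed (simp add: finite_UNIV_card_ge_0)

text \<open>\<open>frob\<close> is the involution \<open>x \<mapsto> x\<^sup>q\<close> of the field with \<open>q\<^sup>2\<close> elements; it is a
  parameter only to fix the type of the field.\<close>

locale hermitian_field =
  fixes q :: nat and frob :: "'a::{finite, field} \<Rightarrow> 'a"
  assumes prime_power: "\<exists>p k. prime p \<and> 1 \<le> k \<and> q = p ^ k"
    and card_UNIV: "card (UNIV :: 'a set) = q ^ 2"
    and frob_eq: "frob = (\<lambda>x. x ^ q)"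
begin

lemma frob_apply: "frob x = x ^ q"
  by (simp add: frob_eq)

lemma two_le_q: "2 \<le> q"
proof -
  obtain p k where p: "prime p" "1 \<le> k" "q = p ^ k"
    using prime_power by blast
  then have "2 \<le> p"
    by (simp add: prime_ge_2_nat)
  moreover from this p(2) have "p \<le> p ^ k"
    by (simp add: self_le_power)
  ultimately show ?thesis
    using p(3) by simp
qed

lemma q_plus_one_less_square: "q + 1 < q ^ 2"
proof -
  have "2 * q \<le> q * q"
    using two_le_q by simp
  with two_le_q show ?thesis
    unfolding power2_eq_square by linarith
qed

lemma prime_CHAR: "prime CHAR('a)"
  by (rule prime_CHAR_semidom) (simp add: finite_imp_CHAR_pos)

lemma q_eq_CHAR_power: obtains k where "q = CHAR('a) ^ k"
proof -
  obtain p k where p: "prime p" "q = p ^ k"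
    using prime_power by blast
  have "CHAR('a) dvd p ^ (k * 2)"
    using CHAR_dvd_CARD[where 'a = 'a] card_UNIV p(2) by (simp add: power_mult)
  then have "CHAR('a) = p"
    using prime_CHAR p(1) by (meson prime_dvd_power primes_dvd_imp_eq)
  with p(2) have "q = CHAR('a) ^ k"
    by simp
  then show thesis
    by (rule that)
qed

lemma frob_add: "frob (x + y) = frob x + frob y"
proof -
  obtain k where "q = CHAR('a) ^ k"
    by (rule q_eq_CHAR_power)
  then show ?thesis
    by (simp add: frob_apply freshmans_dream'[OF prime_CHAR])
qed

lemma frob_mult: "frob (x * y) = frob x * frob y"
  by (simp add: frob_apply power_mult_distrib)

lemma frob_0 [simp]: "frob 0 = 0"
  using two_le_q by (simp add: frob_apply)

lemma frob_1 [simp]: "frob 1 = 1"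
  by (simp add: frob_apply)

lemma frob_eq_0_iff [simp]: "frob x = 0 \<longleftrightarrow> x = 0"
  using two_le_q by (simp add: frob_apply)

lemma frob_uminus: "frob (- x) = - frob x"
  using frob_add[of x "- x"] by (simp add: eq_neg_iff_add_eq_0 add.commute)

lemma frob_diff: "frob (x - y) = frob x - frob y"
  using frob_add[of x "- y"] by (simp add: frob_uminus)

lemma frob_frob [simp]: "frob (frob x) = x"
  using power_card_UNIV_eq_self[of x] card_UNIV by (simp add: frob_apply power2_eq_square power_mult)

definition Fq :: "'a set" where
  "Fq = {x. frob x = x}"

definition Tr :: "'a \<Rightarrow> 'a" where
  "Tr x = x + frob x"

definition Nm :: "'a \<Rightarrow> 'a" where
  "Nm x = x * frob x"

lemma card_Fq_le: "card Fq \<le> q"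
proof -
  have "Fq = {x. x ^ q + (- 1) * x + 0 = 0}"
    by (simp add: Fq_def frob_apply)
  then show ?thesis
    using card_roots_power_add_linear_le[OF two_le_q, of "- 1" 0] by (simp only:)
qed

lemma zero_in_Fq: "0 \<in> Fq"
  by (simp add: Fq_def)

lemma Tr_in_Fq: "Tr x \<in> Fq"
  by (simp add: Fq_def Tr_def frob_add add.commute)

lemma Nm_in_Fq: "Nm x \<in> Fq"
  by (simp add: Fq_def Nm_def frob_mult mult.commute)

lemma Nm_eq_0_iff [simp]: "Nm x = 0 \<longleftrightarrow> x = 0"
  by (simp add: Nm_def)

lemma card_Tr_kernel: "card {x. Tr x = 0} = q"
proof -
  have "card {x\<in>UNIV. Tr x = c} \<le> q" for c
  proof -
    have "{x\<in>UNIV. Tr x = c} = {x. x ^ q + 1 * x + (- c) = 0}"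
      by (auto simp: Tr_def frob_apply algebra_simps)
    then show ?thesis
      using card_roots_power_add_linear_le[OF two_le_q, of 1 "- c"] by (simp only:)
  qed
  then have "card {x\<in>UNIV. Tr x = 0} = q"
    using card_Fq_le card_UNIV Tr_in_Fq zero_in_Fq
    by (intro card_fibre_eq_of_bounded[where S = Fq and n = q]) (auto simp: power2_eq_square)
  then show ?thesis
    by simp
qed

lemma card_Nm_fibre:
  assumes "c \<in> Fq" "c \<noteq> 0"
  shows "card {x. Nm x = c} = q + 1"
proof -
  have "card {x\<in>UNIV - {0}. Nm x = z} \<le> q + 1" for z
  proof -
    have "{x\<in>UNIV - {0}. Nm x = z} \<subseteq> {x. x ^ (q + 1) + 0 * x + (- z) = 0}"
      by (auto simp: Nm_def frob_apply)
    moreover have "card {x. x ^ (q + 1) + 0 * x + (- z) = 0} \<le> q + 1"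
      using two_le_q by (intro card_roots_power_add_linear_le) simp
    ultimately show ?thesis
      by (meson card_mono finite order_trans)
  qed
  moreover have "card (Fq - {0}) \<le> q - 1"
    using card_Fq_le zero_in_Fq by (simp add: card_Diff_singleton)
  moreover have "card (UNIV - {0 :: 'a}) = (q + 1) * (q - 1)"
    using card_UNIV two_le_q by (simp add: card_Diff_singleton power2_eq_square algebra_simps)
  ultimately have "card {x\<in>UNIV - {0}. Nm x = c} = q + 1"
    using assms Nm_in_Fq
    by (intro card_fibre_eq_of_bounded[where S = "Fq - {0}" and n = "q - 1"]) auto
  moreover have "{x\<in>UNIV - {0}. Nm x = c} = {x. Nm x = c}"
    using assms(2) by auto
  ultimately show ?thesis
    by simp
qed

lemma Fq_add: "x \<in> Fq \<Longrightarrow> y \<in> Fq \<Longrightarrow> x + y \<in> Fq"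
  by (simp add: Fq_def frob_add)

lemma Fq_uminus: "x \<in> Fq \<Longrightarrow> - x \<in> Fq"
  by (simp add: Fq_def frob_uminus)

lemma int_card_Nm_eq_uminus:
  assumes "c \<in> Fq"
  shows "int (card {x. Nm x = - c}) = int q + 1 - int q * of_bool (c = 0)"
  using card_Nm_fibre[OF Fq_uminus[OF assms]] by (cases "c = 0") simp_all

section \<open>The Hermitian unital\<close>

definition conj3 :: "'a vec3 \<Rightarrow> 'a vec3" where
  "conj3 v = (case v of (x, y, z) \<Rightarrow> (frob x, frob y, frob z))"

lemma conj3_simp [simp]: "conj3 (x, y, z) = (frob x, frob y, frob z)"
  by (simp add: conj3_def)

definition herm :: "'a vec3 \<Rightarrow> 'a vec3 \<Rightarrow> 'a" where
  "herm u v = dot3 u (conj3 v)"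

lemma herm_self: "herm (x, y, z) (x, y, z) = Nm x + Nm y + Nm z"
  by (simp add: herm_def Nm_def)

lemma herm_commute: "herm b a = frob (herm a b)"
  by (cases a, cases b) (simp add: herm_def frob_add frob_mult mult.commute)

lemma herm_self_scale3: "herm (scale3 c v) (scale3 c v) = Nm c * herm v v"
  by (cases v) (simp add: herm_def Nm_def frob_mult algebra_simps)

lemma herm_self_line:
  "herm (a + scale3 t b) (a + scale3 t b) =
     herm a a + frob t * herm a b + t * herm b a + Nm t * herm b b"
  by (cases a, cases b) (simp add: herm_def Nm_def frob_add frob_mult algebra_simps)

lemma conj3_cross: "conj3 (cross a b) = cross (conj3 a) (conj3 b)"
  by (cases a, cases b) (simp add: frob_diff frob_mult)

lemma det3_conj3: "det3 (conj3 a) (conj3 b) (conj3 c) = frob (det3 a b c)"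
  by (cases a, cases b, cases c) (simp add: det3_def frob_add frob_diff frob_mult)

lemma sum_Nm_add_eq_0:
  "(\<Sum>x\<in>UNIV. \<Sum>y\<in>UNIV. of_bool (Nm x + Nm y = 0)) = int q ^ 3 + int q ^ 2 - int q"
proof -
  have "(\<Sum>x\<in>UNIV. \<Sum>y\<in>UNIV. of_bool (Nm x + Nm y = 0))
      = (\<Sum>y\<in>UNIV. int (card {x. Nm x = - Nm y}))"
    by (subst sum.swap) (simp add: eq_neg_iff_add_eq_0)
  also have "\<dots> = (\<Sum>y::'a\<in>UNIV. int q + 1 - int q * of_bool (y = 0))"
    by (simp only: int_card_Nm_eq_uminus[OF Nm_in_Fq] Nm_eq_0_iff)
  finally show ?thesis
    using card_UNIV by (simp add: sum_subtractf algebra_simps power_numeral_reduce)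
qed

lemma card_isotropic: "int (card {v. herm v v = 0}) = int q ^ 5 - int q ^ 3 + int q ^ 2"
proof -
  have "{v. herm v v = 0} = (SIGMA x:UNIV. SIGMA y:UNIV. {z. Nm z = - (Nm x + Nm y)})"
    by (auto simp: herm_self add_eq_0_iff)
  then have "int (card {v. herm v v = 0})
      = (\<Sum>x\<in>UNIV. \<Sum>y\<in>UNIV. int (card {z. Nm z = - (Nm x + Nm y)}))"
    by simp
  also have "\<dots> = (\<Sum>x\<in>UNIV. \<Sum>y\<in>UNIV. int q + 1 - int q * of_bool (Nm x + Nm y = 0))"
    by (simp only: int_card_Nm_eq_uminus[OF Fq_add[OF Nm_in_Fq Nm_in_Fq]])
  also have "\<dots> = (\<Sum>x::'a\<in>UNIV. \<Sum>y::'a\<in>UNIV. int q + 1)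
      - int q * (\<Sum>x\<in>UNIV. \<Sum>y\<in>UNIV. of_bool (Nm x + Nm y = 0))"
    by (simp add: sum_subtractf sum_distrib_left mult.commute)
  finally show ?thesis
    using card_UNIV unfolding sum_Nm_add_eq_0 by (simp add: algebra_simps power_numeral_reduce)
qed

lemma isotropic_orthogonal_imp_dependent:
  assumes "herm a a = 0" "herm b b = 0" "herm a b = 0"
  shows "cross a b = (0, 0, 0)"
proof (rule ccontr)
  assume ab: "cross a b \<noteq> (0, 0, 0)"
  have "herm b a = 0"
    using assms(3) herm_commute[of b a] by simp
  have "cross (conj3 a) (cross a b) = (0, 0, 0)" "cross (conj3 b) (cross a b) = (0, 0, 0)"
    using assms \<open>herm b a = 0\<close> by (simp_all add: cross_cross herm_def dot3_commute[of "conj3 _"])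
  then obtain c d where "conj3 a = scale3 c (cross a b)" "conj3 b = scale3 d (cross a b)"
    using ab by (metis cross_eq_0_imp_parallel)
  then have "conj3 (cross a b) = (0, 0, 0)"
    by (simp add: conj3_cross cross_scale3_left cross_scale3_right cross_self)
  with ab show False
    by (cases "cross a b") simp
qed

lemma Nm_eq_power: "Nm x = x ^ (q + 1)"
  by (simp add: Nm_def frob_apply)

lemma unital_eq: "hermitian_unital q = proj_point ` {v. v \<noteq> (0, 0, 0) \<and> herm v v = 0}"
  by (force simp: hermitian_unital_def herm_self Nm_eq_power)

lemma mem_unital_iff:
  assumes "v \<noteq> (0, 0, 0)"
  shows "proj_point v \<in> hermitian_unital q \<longleftrightarrow> herm v v = 0"
proof
  assume "proj_point v \<in> hermitian_unital q"
  then obtain u where u: "herm u u = 0" "proj_point v = proj_point u"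
    by (auto simp: unital_eq)
  then have "v \<in> proj_point u"
    using proj_point_self[of v] by simp
  then obtain c where "v = scale3 c u"
    by (auto simp: mem_proj_point)
  with u(1) show "herm v v = 0"
    by (simp add: herm_self_scale3)
qed (use assms in \<open>auto simp: unital_eq\<close>)

lemma unital_point_cases:
  assumes "P \<in> hermitian_unital q"
  obtains v where "v \<noteq> (0, 0, 0)" "herm v v = 0" "P = proj_point v"
  using assms by (auto simp: unital_eq)

lemma card_unital: "card (hermitian_unital q :: 'a vec3 set set) = q ^ 3 + 1"
proof -
  define V where "V = {v :: 'a vec3. v \<noteq> (0, 0, 0) \<and> herm v v = 0}"
  define u where "u = int (card (hermitian_unital q :: 'a vec3 set set))"
  have "card V = card (hermitian_unital q :: 'a vec3 set set) * (q ^ 2 - 1)"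
    unfolding unital_eq V_def[symmetric] card_UNIV[symmetric]
    by (rule card_scale_closed) (auto simp: V_def herm_self_scale3 scale3_eq_0_iff)
  moreover have "1 < q ^ 2"
    using two_le_q one_less_power[of q 2] by simp
  then have q21: "int (q ^ 2 - 1) = int q ^ 2 - 1"
    by (simp add: of_nat_diff)
  ultimately have V: "int (card V) = u * (int q ^ 2 - 1)"
    by (simp only: u_def of_nat_mult)
  have "{v. herm v v = 0} = insert (0, 0, 0) V"
    by (auto simp: V_def herm_self)
  then have "int (card V) + 1 = int q ^ 5 - int q ^ 3 + int q ^ 2"
    using card_isotropic by (simp add: V_def)
  with V have "u * (int q ^ 2 - 1) = (int q ^ 3 + 1) * (int q ^ 2 - 1)"
    by (simp add: algebra_simps power_numeral_reduce)
  moreover have "int q ^ 2 - 1 \<noteq> 0"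
    using \<open>1 < q ^ 2\<close> q21 by (metis of_nat_eq_0_iff zero_less_diff less_irrefl)
  ultimately show ?thesis
    by (simp add: u_def of_nat_eq_iff[symmetric, where 'a = int])
qed

lemma card_secant_unital:
  assumes "herm a a = 0" "herm b b = 0" and ab: "cross a b \<noteq> (0, 0, 0)"
  shows "card (proj_line (cross a b) \<inter> hermitian_unital q) = q + 1"
proof -
  define h where "h = herm a b"
  define K where "K = {t. Tr (t * frob h) = 0}"
  have "h \<noteq> 0"
    unfolding h_def using isotropic_orthogonal_imp_dependent[OF assms(1,2)] ab by metis
  have b: "b \<noteq> (0, 0, 0)"
    using ab by (cases a) auto
  have "herm (a + scale3 t b) (a + scale3 t b) = Tr (t * frob h)" for t
    using assms(1,2) by (simp add: herm_self_line Tr_def h_def herm_commute[of b a] frob_mult)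
  then have "proj_point (a + scale3 t b) \<in> hermitian_unital q \<longleftrightarrow> t \<in> K" for t
    by (simp add: mem_unital_iff[OF line_param_nonzero[OF ab]] K_def)
  then have "proj_line (cross a b) \<inter> hermitian_unital q
      = insert (proj_point b) ((\<lambda>t. proj_point (a + scale3 t b)) ` K)"
    using mem_unital_iff[OF b] assms(2) by (auto simp: proj_line_cross_eq[OF ab])
  moreover have "inj_on (\<lambda>t. proj_point (a + scale3 t b)) K"
    using inj_line_param[OF ab] by (rule inj_on_subset) simp
  moreover have "proj_point b \<notin> (\<lambda>t. proj_point (a + scale3 t b)) ` K"
    using line_param_neq[OF ab] by auto
  moreover have "card K = q"
  proof -
    have "t \<in> (\<lambda>x. x / frob h) ` {x. Tr x = 0}" if "t \<in> K" for t
      using that \<open>h \<noteq> 0\<close> by (intro image_eqI[of _ _ "t * frob h"]) (simp_all add: K_def)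
    then have "K = (\<lambda>x. x / frob h) ` {x. Tr x = 0}"
      using \<open>h \<noteq> 0\<close> by (auto simp: K_def)
    moreover have "inj_on (\<lambda>x. x / frob h) {x. Tr x = 0}"
      using \<open>h \<noteq> 0\<close> by (auto intro: inj_onI)
    ultimately show ?thesis
      by (simp add: card_image card_Tr_kernel)
  qed
  ultimately show ?thesis
    by (simp add: card_image)
qed

lemma ex1_secant_through:
  fixes x y :: "'a vec3 set"
  assumes "x \<in> hermitian_unital q" "y \<in> hermitian_unital q" "x \<noteq> y"
  shows "\<exists>!l. l \<in> secants q \<and> x \<in> l \<and> y \<in> l"
proof -
  obtain a where a: "a \<noteq> (0, 0, 0)" "herm a a = 0" "x = proj_point a"
    using assms(1) by (rule unital_point_cases)
  obtain b where b: "b \<noteq> (0, 0, 0)" "herm b b = 0" "y = proj_point b"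
    using assms(2) by (rule unital_point_cases)
  have ab: "cross a b \<noteq> (0, 0, 0)"
    using a b assms(3) by (simp add: proj_point_eq_iff)
  define l where "l = proj_line (cross a b)"
  have "l \<in> secants q"
    unfolding secants_def PG_lines_def l_def using ab card_secant_unital[OF a(2) b(2) ab] by blast
  moreover have "x \<in> l" "y \<in> l"
    using a b by (simp_all add: l_def mem_proj_line_iff dot3_cross_left dot3_cross_right)
  moreover have "m = l" if "m \<in> secants q" "x \<in> m" "y \<in> m" for m
    using that a b assms(3) PG_line_through(2)[of m a b] by (simp add: secants_def l_def)
  ultimately show ?thesis
    by blast
qed

lemma isotropic_onan_det3_nonzero:
  assumes iso: "herm a a = 0" "herm b b = 0" "herm c c = 0" and abc: "det3 a b c \<noteq> 0"
    and d: "herm (b + scale3 s c) (b + scale3 s c) = 0"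
    and e: "herm (c + scale3 t a) (c + scale3 t a) = 0"
    and f: "herm (a + scale3 u b) (a + scale3 u b) = 0"
  shows "det3 (c + scale3 t a) (a + scale3 u b) (b + scale3 s c) \<noteq> 0"
proof
  assume "det3 (c + scale3 t a) (a + scale3 u b) (b + scale3 s c) = 0"
  with abc have stu: "s * t * u = - 1"
    by (simp add: det3_menelaus add_eq_0_iff)
  define \<alpha> \<beta> \<gamma> where "\<alpha> = herm b c" and "\<beta> = herm c a" and "\<gamma> = herm a b"
  have e1: "frob s * \<alpha> = - (s * frob \<alpha>)"
    using d iso by (simp add: \<alpha>_def herm_self_line herm_commute[of c b] eq_neg_iff_add_eq_0)
  have e2: "frob t * \<beta> = - (t * frob \<beta>)"
    using e iso by (simp add: \<beta>_def herm_self_line herm_commute[of a c] eq_neg_iff_add_eq_0)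
  have e3: "frob u * \<gamma> = - (u * frob \<gamma>)"
    using f iso by (simp add: \<gamma>_def herm_self_line herm_commute[of b a] eq_neg_iff_add_eq_0)
  have "frob (s * t * u) * (\<alpha> * \<beta> * \<gamma>) = (frob s * \<alpha>) * (frob t * \<beta>) * (frob u * \<gamma>)"
    by (simp add: frob_mult ac_simps)
  also have "\<dots> = - (s * t * u) * (frob \<alpha> * frob \<beta> * frob \<gamma>)"
    unfolding e1 e2 e3 by (simp add: ac_simps)
  finally have "frob (s * t * u) * (\<alpha> * \<beta> * \<gamma>) = - (s * t * u) * (frob \<alpha> * frob \<beta> * frob \<gamma>)" .
  then have "\<alpha> * \<beta> * \<gamma> + frob \<alpha> * frob \<beta> * frob \<gamma> = 0"
    by (simp add: stu frob_uminus flip: neg_eq_iff_add_eq_0)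
  moreover have "det3 a b c * frob (det3 a b c)
      = \<alpha> * \<beta> * \<gamma> + frob \<alpha> * frob \<beta> * frob \<gamma>"
    using iso herm_commute[of a c] herm_commute[of b a] herm_commute[of c b]
    by (simp add: \<alpha>_def \<beta>_def \<gamma>_def det3_conj3[symmetric] det3_mult_det3 herm_def algebra_simps)
  ultimately show False
    using abc by simp
qed

lemma unital_point_on_secant:
  assumes ab: "cross a b \<noteq> (0, 0, 0)"
    and P: "P \<in> proj_line (cross a b)" "P \<in> hermitian_unital q" "P \<noteq> proj_point b"
  obtains t where "P = proj_point (a + scale3 t b)" "herm (a + scale3 t b) (a + scale3 t b) = 0"
proof -
  obtain t where "P = proj_point (a + scale3 t b)"
    using P(1,3) by (auto simp: proj_line_cross_eq[OF ab])
  moreover from this P(2) have "herm (a + scale3 t b) (a + scale3 t b) = 0"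
    by (simp add: mem_unital_iff[OF line_param_nonzero[OF ab]])
  ultimately show thesis
    by (rule that)
qed

lemma unital_onan_triangle:
  assumes iso: "herm a a = 0" "herm b b = 0" "herm c c = 0" and abc: "det3 a b c \<noteq> 0"
    and U: "D \<in> hermitian_unital q" "E \<in> hermitian_unital q" "F \<in> hermitian_unital q"
    and sides: "D \<in> proj_line (cross b c)" "E \<in> proj_line (cross c a)" "F \<in> proj_line (cross a b)"
    and off_vertices: "D \<noteq> proj_point c" "E \<noteq> proj_point a" "F \<noteq> proj_point b"
    and l: "l \<in> PG_lines" "D \<in> l" "E \<in> l" "F \<in> l"
  shows False
proof -
  have bc: "cross b c \<noteq> (0, 0, 0)" and ca: "cross c a \<noteq> (0, 0, 0)" and ab: "cross a b \<noteq> (0, 0, 0)"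
    using abc det3_rotate[of a b c] det3_rotate[of b c a] by (auto simp: det3_def)
  obtain s where s: "D = proj_point (b + scale3 s c)" "herm (b + scale3 s c) (b + scale3 s c) = 0"
    using bc sides(1) U(1) off_vertices(1) by (rule unital_point_on_secant)
  obtain t where t: "E = proj_point (c + scale3 t a)" "herm (c + scale3 t a) (c + scale3 t a) = 0"
    using ca sides(2) U(2) off_vertices(2) by (rule unital_point_on_secant)
  obtain u where u: "F = proj_point (a + scale3 u b)" "herm (a + scale3 u b) (a + scale3 u b) = 0"
    using ab sides(3) U(3) off_vertices(3) by (rule unital_point_on_secant)
  obtain w where w: "w \<noteq> (0, 0, 0)" "l = proj_line w"
    using l(1) by (auto simp: PG_lines_def)
  have "det3 (c + scale3 t a) (a + scale3 u b) (b + scale3 s c) = 0"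
    using l(2-4) s(1) t(1) u(1) w line_param_nonzero[OF bc] line_param_nonzero[OF ca]
      line_param_nonzero[OF ab]
    by (intro det3_eq_0_of_orthogonal[of w]) (simp_all add: mem_proj_line_iff)
  with isotropic_onan_det3_nonzero[OF iso abc s(2) t(2) u(2)] show False
    by simp
qed

lemma unital_no_onan_configuration:
  fixes A B C D E F :: "'a vec3 set" and l1 l2 l3 l4 :: "'a vec3 set set"
  assumes U: "A \<in> hermitian_unital q" "B \<in> hermitian_unital q" "C \<in> hermitian_unital q"
      "D \<in> hermitian_unital q" "E \<in> hermitian_unital q" "F \<in> hermitian_unital q"
    and L: "l1 \<in> PG_lines" "l2 \<in> PG_lines" "l3 \<in> PG_lines" "l4 \<in> PG_lines"
    and on_l1: "B \<in> l1" "C \<in> l1" "D \<in> l1" and on_l2: "C \<in> l2" "A \<in> l2" "E \<in> l2"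
    and on_l3: "A \<in> l3" "B \<in> l3" "F \<in> l3" and on_l4: "D \<in> l4" "E \<in> l4" "F \<in> l4"
    and triangle: "A \<notin> l1" "B \<noteq> C" and off_vertices: "D \<noteq> C" "E \<noteq> A" "F \<noteq> B"
  shows False
proof -
  obtain a where a: "a \<noteq> (0, 0, 0)" "herm a a = 0" "A = proj_point a"
    using U(1) by (rule unital_point_cases)
  obtain b where b: "b \<noteq> (0, 0, 0)" "herm b b = 0" "B = proj_point b"
    using U(2) by (rule unital_point_cases)
  obtain c where c: "c \<noteq> (0, 0, 0)" "herm c c = 0" "C = proj_point c"
    using U(3) by (rule unital_point_cases)
  have "C \<noteq> A" "A \<noteq> B"
    using triangle on_l1 by auto
  have l1: "l1 = proj_line (cross b c)"
    using PG_line_through(2)[OF L(1) b(1) c(1)] on_l1(1,2) triangle(2) b(3) c(3) by simp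
  have l2: "l2 = proj_line (cross c a)"
    using PG_line_through(2)[OF L(2) c(1) a(1)] on_l2(1,2) \<open>C \<noteq> A\<close> a(3) c(3) by simp
  have l3: "l3 = proj_line (cross a b)"
    using PG_line_through(2)[OF L(3) a(1) b(1)] on_l3(1,2) \<open>A \<noteq> B\<close> a(3) b(3) by simp
  have "det3 a b c \<noteq> 0"
    using triangle(1) l1 a by (simp add: mem_proj_line_iff det3_def[symmetric] det3_rotate)
  then show False
    using unital_onan_triangle[OF a(2) b(2) c(2) _ U(4-6) _ _ _ _ _ _ L(4) on_l4]
      on_l1(3) on_l2(3) on_l3(3) off_vertices l1 l2 l3 a(3) b(3) c(3)
    by simp
qed

sublocale unital: steiner_system "hermitian_unital q :: 'a vec3 set set" "secants q" "q + 1" "q ^ 2"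
proof
  show "card (l \<inter> hermitian_unital q) = q + 1" if "l \<in> secants q" for l :: "'a vec3 set set"
    using that by (simp add: secants_def)
  show "q ^ 2 * (q + 1 - 1) = card (hermitian_unital q :: 'a vec3 set set) - 1"
    by (simp add: card_unital power3_eq_cube power2_eq_square)
qed (use two_le_q ex1_secant_through in auto)

lemma card_secants: "card (secants q :: 'a vec3 set set set) = q ^ 4 - q ^ 3 + q ^ 2"
proof -
  have "card (secants q :: 'a vec3 set set set) * (q + 1) = (q ^ 3 + 1) * q ^ 2"
    using unital.card_blocks by (simp add: card_unital)
  then have "int (card (secants q :: 'a vec3 set set set)) * (int q + 1)
      = (int q ^ 4 - int q ^ 3 + int q ^ 2) * (int q + 1)"
    by (simp add: algebra_simps power_numeral_reduce flip: of_nat_eq_iff[where 'a = int])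
  then have "int (card (secants q :: 'a vec3 set set set)) = int q ^ 4 - int q ^ 3 + int q ^ 2"
    by simp
  also have "\<dots> = int (q ^ 4 - q ^ 3 + q ^ 2)"
  proof -
    have "q ^ 3 \<le> q ^ 4"
      using two_le_q by (simp add: power_increasing)
    then show ?thesis
      by (simp only: of_nat_add of_nat_diff of_nat_power)
  qed
  finally show ?thesis
    by (simp only: of_nat_eq_iff)
qed

lemma H_adj_eq: "H_adj q = unital.adjacent"
  by (intro ext) (simp add: H_adj_def unital.adjacent_def)

lemma clique_family_eq: "clique_family q = unital.pencil ` hermitian_unital q"
  by (auto simp: clique_family_def clique_at_def unital.pencil_def)

lemma common_nbrs_eq: "common_nbrs q l m = {n \<in> secants q. unital.adjacent l n \<and> unital.adjacent m n}"
  by (simp add: common_nbrs_def H_adj_eq)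

lemma pencil_is_maximal_clique:
  assumes "x \<in> hermitian_unital q"
  shows "is_maximal_clique q (unital.pencil x)"
  using assms unital.pencil_subset_blocks unital.adjacent_in_pencil
    unital.pencil_maximal[OF q_plus_one_less_square]
  by (auto simp: is_maximal_clique_def is_clique_def H_adj_eq)

lemma unital_K4_three_concurrent:
  assumes "unital.adjacent a b" "unital.adjacent a c" "unital.adjacent a d"
    and "unital.adjacent b c" "unital.adjacent b d" "unital.adjacent c d"
  shows "\<exists>x\<in>hermitian_unital q. 3 \<le> card ({a, b, c, d} \<inter> unital.pencil x)"
proof (rule ccontr)
  assume none: "\<not> ?thesis"
  have lines: "a \<in> secants q" "b \<in> secants q" "c \<in> secants q" "d \<in> secants q"
    and distinct: "a \<noteq> b" "a \<noteq> c" "a \<noteq> d" "b \<noteq> c" "b \<noteq> d" "c \<noteq> d"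
    using assms by (auto simp: unital.adjacent_def)
  have not3: "\<not> (x \<in> l1 \<and> x \<in> l2 \<and> x \<in> l3)"
    if "x \<in> hermitian_unital q" "l1 \<in> {a, b, c, d}" "l2 \<in> {a, b, c, d}" "l3 \<in> {a, b, c, d}"
      "l1 \<noteq> l2" "l1 \<noteq> l3" "l2 \<noteq> l3" for x l1 l2 l3
  proof
    assume "x \<in> l1 \<and> x \<in> l2 \<and> x \<in> l3"
    with that lines have "{l1, l2, l3} \<subseteq> {a, b, c, d} \<inter> unital.pencil x"
      by (auto simp: unital.pencil_def)
    from card_mono[OF _ this] that have "3 \<le> card ({a, b, c, d} \<inter> unital.pencil x)"
      by simp
    with none that(1) show False
      by blast
  qed
  obtain C where C: "C \<in> hermitian_unital q" "C \<in> a" "C \<in> b"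
    using assms(1) by (auto simp: unital.adjacent_def)
  obtain B where B: "B \<in> hermitian_unital q" "B \<in> a" "B \<in> c"
    using assms(2) by (auto simp: unital.adjacent_def)
  obtain D where D: "D \<in> hermitian_unital q" "D \<in> a" "D \<in> d"
    using assms(3) by (auto simp: unital.adjacent_def)
  obtain A where A: "A \<in> hermitian_unital q" "A \<in> b" "A \<in> c"
    using assms(4) by (auto simp: unital.adjacent_def)
  obtain E where E: "E \<in> hermitian_unital q" "E \<in> b" "E \<in> d"
    using assms(5) by (auto simp: unital.adjacent_def)
  obtain F where F: "F \<in> hermitian_unital q" "F \<in> c" "F \<in> d"
    using assms(6) by (auto simp: unital.adjacent_def)
  have "A \<notin> a" "B \<noteq> C" "D \<noteq> C" "E \<noteq> A" "F \<noteq> B"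
    using not3[of A a b c] not3[of B a b c] not3[of C a b d] not3[of A b c d] not3[of B a c d]
      A B C D E F distinct by auto
  moreover have "a \<in> PG_lines" "b \<in> PG_lines" "c \<in> PG_lines" "d \<in> PG_lines"
    using lines by (simp_all add: secants_def)
  ultimately show False
    using unital_no_onan_configuration[of A B C D E F a b c d] A B C D E F by blast
qed

end

theorem proposition2p2:
  fixes q :: nat
  assumes "\<exists>p k. prime p \<and> k \<ge> 1 \<and> q = p ^ k"
    and "card (UNIV :: 'a::{finite, field} set) = q ^ 2"
  shows
    "card (secants q :: 'a vec3 set set set) = q ^ 4 - q ^ 3 + q ^ 2
     \<and> (\<forall>l \<in> (secants q :: 'a vec3 set set set).
          card {m. H_adj q l m} = (q + 1) * (q ^ 2 - 1))
     \<and> card (clique_family q :: 'a vec3 set set set set) = q ^ 3 + 1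
     \<and> (\<forall>C \<in> (clique_family q :: 'a vec3 set set set set).
          is_maximal_clique q C \<and> card C = q ^ 2)
     \<and> (\<forall>C1 \<in> (clique_family q :: 'a vec3 set set set set). \<forall>C2 \<in> clique_family q.
          C1 \<noteq> C2 \<longrightarrow> card (C1 \<inter> C2) = 1)
     \<and> (\<forall>v \<in> (secants q :: 'a vec3 set set set).
          card {C \<in> clique_family q. v \<in> C} = q + 1)
     \<and> (\<forall>u v :: 'a vec3 set set. H_adj q u v \<longrightarrow>
          card {C \<in> clique_family q. u \<in> C \<and> v \<in> C} = 1)
     \<and> (\<forall>a b c d :: 'a vec3 set set.
          H_adj q a b \<and> H_adj q a c \<and> H_adj q a d \<and> H_adj q b c \<and> H_adj q b d \<and> H_adj q c d
          \<longrightarrow> (\<exists>C \<in> clique_family q. card ({a, b, c, d} \<inter> C) \<ge> 3))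
     \<and> (\<forall>u v :: 'a vec3 set set. H_adj q u v \<longrightarrow> card (common_nbrs q u v) = 2 * q ^ 2 - 2)
     \<and> (\<forall>u \<in> (secants q :: 'a vec3 set set set). \<forall>v \<in> secants q.
          u \<noteq> v \<and> \<not> H_adj q u v \<longrightarrow> card (common_nbrs q u v) = (q + 1) ^ 2)"
proof -
  interpret hermitian_field q "\<lambda>x::'a. x ^ q"
    by unfold_locales (use assms in auto)
  have "1 < q ^ 2" "q ^ 2 - 2 + q ^ 2 = 2 * q ^ 2 - 2"
    using q_plus_one_less_square by linarith+
  then show ?thesis
    unfolding clique_family_eq common_nbrs_eq H_adj_eq
    using card_secants card_unital unital.card_adjacent unital.card_pencil pencil_is_maximal_clique
      unital.card_Int_pencils unital.inj_on_pencil unital.card_pencils_containing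
      unital.card_pencils_containing_adjacent unital_K4_three_concurrent
      unital.card_common_neighbours_adjacent unital.card_common_neighbours_nonadjacent
    by (auto simp: card_image)
qed

end
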